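(* Let $\Delta$ be a simplicial polytopal fan in $\mathbb{R}^d$ with ray generators $\mathbf{v}_1,\ldots,\mathbf{v}_n$ and let $m\ge1$. Let $\Delta^m$ be the polyhedral fan in $\mathbb{R}^{m\times d}$ whose cells are the products $\sigma_1\times\cdots\times\sigma_m$ with $\sigma_j\in\Delta$, and let $\Upsilon$ be the collection of all closed cones $\overline{U_G}$, $G\in\mathcal{G}$, such that $G$ has no matching of size $n$. Then $\Upsilon$ is strictly contained in $\Delta^m$ if and only if $m\ge n$.
   Context: A fan is simplicial if every cone is generated by linearly independent vectors; polytopal if it is the normal fan of a polytope. For $\mathbf{u}\in\mathbb{R}^d$, with $\sigma$ the cone of $\Delta$ containing $\mathbf{u}$ in its relative interior and $\mathbf{u}=\sum_{k\in I_\sigma}\lambda_k\mathbf{v}_k$ over the generators of $\sigma$, set $[\mathbf{u}]_i=\lambda_i$ for $i\in I_\sigma$ and $0$ otherwise. For $U\in\mathbb{R}^{m\times d}$ with rows $\mathbf{u}^{(1)},\ldots,\mathbf{u}^{(m)}$, $G_U$ is the bipartite graph on $[n]\sqcup[m]$ with $i\in[n]$ adjacent to $j\in[m]$ iff $[\mathbf{u}^{(j)}]_i>0$. $\mathcal{G}$ is the set of graphs of the form $G_U$, and for $G\in\mathcal{G}$, $U_G=\{U\in\mathbb{R}^{m\times d}\colon G_U=G\}$; the closures $\overline{U_G}$ are exactly the cells of $\Delta^m$. *)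

theory Defs
  imports "HOL-Analysis.Analysis"
begin

definition pos_hull :: "(nat \<Rightarrow> 'a::real_vector) \<Rightarrow> nat set \<Rightarrow> 'a set" where
  "pos_hull v I = {x. \<exists>c. (\<forall>i\<in>I. 0 \<le> c i) \<and> x = (\<Sum>i\<in>I. c i *\<^sub>R v i)}"

text \<open>A simplicial fan with ray generators v 0, ..., v (n-1), given by the family F of
  index sets of its cones: cone(sigma) = pos_hull v sigma.\<close>
definition simplicial_fan :: "nat \<Rightarrow> (nat \<Rightarrow> real^'d) \<Rightarrow> nat set set \<Rightarrow> bool" where
  "simplicial_fan n v F \<longleftrightarrow>
     F \<noteq> {} \<and>
     (\<forall>\<sigma>\<in>F. \<sigma> \<subseteq> {0..<n}) \<and>
     (\<forall>\<sigma>\<in>F. \<forall>\<tau>. \<tau> \<subseteq> \<sigma> \<longrightarrow> \<tau> \<in> F) \<and>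
     (\<forall>i<n. {i} \<in> F) \<and>
     inj_on v {0..<n} \<and>
     (\<forall>\<sigma>\<in>F. inj_on v \<sigma> \<and> independent (v ` \<sigma>)) \<and>
     (\<forall>\<sigma>\<in>F. \<forall>\<tau>\<in>F. pos_hull v \<sigma> \<inter> pos_hull v \<tau> = pos_hull v (\<sigma> \<inter> \<tau>))"

definition normal_cone :: "(real^'d) set \<Rightarrow> (real^'d) set \<Rightarrow> (real^'d) set" where
  "normal_cone P G = {c. \<forall>x\<in>G. \<forall>y\<in>P. c \<bullet> y \<le> c \<bullet> x}"

definition polytopal_fan :: "(nat \<Rightarrow> real^'d) \<Rightarrow> nat set set \<Rightarrow> bool" where
  "polytopal_fan v F \<longleftrightarrow>
     (\<exists>P. polytope P \<and>
          {pos_hull v \<sigma> | \<sigma>. \<sigma> \<in> F} = {normal_cone P G | G. G face_of P \<and> G \<noteq> {}})"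

definition fan_coord :: "(nat \<Rightarrow> real^'d) \<Rightarrow> nat set set \<Rightarrow> real^'d \<Rightarrow> nat \<Rightarrow> real" where
  "fan_coord v F u i =
     (if \<exists>\<sigma>\<in>F. u \<in> rel_interior (pos_hull v \<sigma>) \<and> i \<in> \<sigma>
      then (THE l. \<exists>\<sigma>\<in>F. \<exists>c. u \<in> rel_interior (pos_hull v \<sigma>) \<and> i \<in> \<sigma> \<and>
                          u = (\<Sum>k\<in>\<sigma>. c k *\<^sub>R v k) \<and> l = c i)
      else 0)"

text \<open>The bipartite graph G_U on [n] (left, nat indices < n) and rows of U (right, type 'm):
  edge (i, j) iff [U_j]_i > 0.\<close>
definition graph_of :: "nat \<Rightarrow> (nat \<Rightarrow> real^'d) \<Rightarrow> nat set set \<Rightarrow> real^'d^'m \<Rightarrow> (nat \<times> 'm) set" where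
  "graph_of n v F U = {(i, j). i < n \<and> 0 < fan_coord v F (U $ j) i}"

definition has_matching :: "('a \<times> 'b) set \<Rightarrow> nat \<Rightarrow> bool" where
  "has_matching G k \<longleftrightarrow> (\<exists>M. M \<subseteq> G \<and> finite M \<and> card M = k \<and> inj_on fst M \<and> inj_on snd M)"

definition U_of :: "nat \<Rightarrow> (nat \<Rightarrow> real^'d) \<Rightarrow> nat set set \<Rightarrow> (nat \<times> 'm) set \<Rightarrow> (real^'d^'m) set" where
  "U_of n v F G = {U. graph_of n v F U = G}"

definition Upsilon :: "nat \<Rightarrow> (nat \<Rightarrow> real^'d) \<Rightarrow> nat set set \<Rightarrow> (real^'d^'m) set set" where
  "Upsilon n v F = {closure (U_of n v F G) | G. G \<in> range (graph_of n v F) \<and> \<not> has_matching G n}"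

definition Delta_pow :: "(nat \<Rightarrow> real^'d) \<Rightarrow> nat set set \<Rightarrow> (real^'d^'m) set set" where
  "Delta_pow v F = {{U. \<forall>j. U $ j \<in> pos_hull v (\<sigma> j)} | \<sigma>. \<forall>j. \<sigma> j \<in> F}"

end

theory Submission
  imports Defs
begin

text \<open>
  The cells of \<open>\<Delta>\<^sup>m\<close> are indexed by tuples \<open>s\<close> of cones of \<open>\<Delta>\<close>, one per row. In a simplicial
  fan a vector lies in the relative interior of exactly one cone, where its coordinates are its
  (positive) coefficients; a polytopal fan is complete, so every vector lies in such a relative
  interior. Hence \<open>G\<^sub>U\<close> is the support graph \<open>{(i, j). i \<in> s j}\<close> of the cell whose relative interior
  contains \<open>U\<close>, \<open>U\<^sub>G\<close> is that relatively open cell, and its closure is the closed cell. So \<open>\<Upsilon>\<close>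
  consists of the cells whose support graph has no matching of size \<open>n\<close>. Such a matching uses
  \<open>n\<close> distinct rows, so for \<open>m < n\<close> we get \<open>\<Upsilon> = \<Delta>\<^sup>m\<close>; for \<open>m \<ge> n\<close> the cell putting the ray
  \<open>v\<^sub>i\<close> into row \<open>e(i)\<close>, for an injection \<open>e\<close>, has a perfect matching of \<open>[n]\<close> and is missing from
  \<open>\<Upsilon>\<close>, since distinct tuples give distinct cells.
\<close>

section \<open>Finitely generated cones\<close>

lemma scaleR_sum_add_scaleR_sum:
  fixes v :: "nat \<Rightarrow> 'a::real_vector"
  shows "a *\<^sub>R (\<Sum>i\<in>\<sigma>. c i *\<^sub>R v i) + b *\<^sub>R (\<Sum>i\<in>\<sigma>. d i *\<^sub>R v i)
    = (\<Sum>i\<in>\<sigma>. (a * c i + b * d i) *\<^sub>R v i)"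
  by (simp add: scaleR_sum_right sum.distrib scaleR_add_left)

lemma zero_in_pos_hull: "0 \<in> pos_hull v \<sigma>"
  unfolding pos_hull_def by (intro CollectI exI[of _ "\<lambda>i. 0"]) simp

lemma pos_hull_eq_convex_cone_hull:
  assumes "finite \<sigma>"
  shows "pos_hull v \<sigma> = convex_cone hull (v ` \<sigma>)"
proof
  show "pos_hull v \<sigma> \<subseteq> convex_cone hull (v ` \<sigma>)"
  proof
    fix x assume "x \<in> pos_hull v \<sigma>"
    then obtain c where c: "\<forall>i\<in>\<sigma>. 0 \<le> c i" and x: "x = (\<Sum>i\<in>\<sigma>. c i *\<^sub>R v i)"
      unfolding pos_hull_def by blast
    have "(\<Sum>i\<in>\<tau>. c i *\<^sub>R v i) \<in> convex_cone hull (v ` \<sigma>)" if "\<tau> \<subseteq> \<sigma>" for \<tau>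
      using finite_subset[OF that assms] that
    proof (induction \<tau> rule: finite_induct)
      case empty
      then show ?case by (simp add: convex_cone_hull_contains_0)
    next
      case (insert i \<tau>)
      have "c i *\<^sub>R v i \<in> convex_cone hull (v ` \<sigma>)"
        using insert.prems c by (intro convex_cone_hull_mul hull_inc) auto
      then show ?case
        using insert by (simp add: convex_cone_hull_add)
    qed
    then show "x \<in> convex_cone hull (v ` \<sigma>)" using x by blast
  qed
next
  have "convex_cone (pos_hull v \<sigma>)"
    unfolding convex_cone_iff
  proof (intro conjI ballI allI impI)
    fix x y assume "x \<in> pos_hull v \<sigma>" "y \<in> pos_hull v \<sigma>"
    then obtain c d where "\<forall>i\<in>\<sigma>. 0 \<le> c i" "x = (\<Sum>i\<in>\<sigma>. c i *\<^sub>R v i)"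
        "\<forall>i\<in>\<sigma>. 0 \<le> d i" "y = (\<Sum>i\<in>\<sigma>. d i *\<^sub>R v i)"
      unfolding pos_hull_def by blast
    then show "x + y \<in> pos_hull v \<sigma>"
      unfolding pos_hull_def
      by (intro CollectI exI[of _ "\<lambda>i. c i + d i"]) (simp add: sum.distrib scaleR_add_left)
  next
    fix x and a :: real assume "x \<in> pos_hull v \<sigma>" "0 \<le> a"
    then obtain c where "\<forall>i\<in>\<sigma>. 0 \<le> c i" "x = (\<Sum>i\<in>\<sigma>. c i *\<^sub>R v i)"
      unfolding pos_hull_def by blast
    with \<open>0 \<le> a\<close> show "a *\<^sub>R x \<in> pos_hull v \<sigma>"
      unfolding pos_hull_def by (intro CollectI exI[of _ "\<lambda>i. a * c i"]) (simp add: scaleR_sum_right)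
  qed (rule zero_in_pos_hull)
  moreover have "v ` \<sigma> \<subseteq> pos_hull v \<sigma>"
  proof
    fix x assume "x \<in> v ` \<sigma>"
    then obtain k where k: "k \<in> \<sigma>" "x = v k" by blast
    have "(\<Sum>i\<in>\<sigma>. (if i = k then 1 else 0) *\<^sub>R v i) = (\<Sum>i\<in>\<sigma>. if i = k then v i else 0)"
      by (rule sum.cong) auto
    then have "x = (\<Sum>i\<in>\<sigma>. (if i = k then 1 else 0) *\<^sub>R v i)"
      using k assms by simp
    then show "x \<in> pos_hull v \<sigma>"
      unfolding pos_hull_def by (intro CollectI exI[of _ "\<lambda>i. if i = k then 1 else 0"]) simp
  qed
  ultimately show "convex_cone hull (v ` \<sigma>) \<subseteq> pos_hull v \<sigma>"
    by (rule hull_minimal[rotated])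
qed

lemma closed_pos_hull:
  fixes v :: "nat \<Rightarrow> 'a::euclidean_space"
  shows "finite \<sigma> \<Longrightarrow> closed (pos_hull v \<sigma>)"
  by (simp add: pos_hull_eq_convex_cone_hull closed_convex_cone_hull)

lemma convex_pos_hull: "finite \<sigma> \<Longrightarrow> convex (pos_hull v \<sigma>)"
  by (simp add: pos_hull_eq_convex_cone_hull convex_convex_cone_hull)

lemma rel_interior_pos_hull_imp_pos_coeffs:
  fixes v :: "nat \<Rightarrow> 'a::euclidean_space"
  assumes "finite \<sigma>" and z: "z \<in> rel_interior (pos_hull v \<sigma>)"
  obtains c where "\<forall>i\<in>\<sigma>. 0 < c i" "z = (\<Sum>i\<in>\<sigma>. c i *\<^sub>R v i)"
proof -
  have "(\<Sum>i\<in>\<sigma>. 1 *\<^sub>R v i) \<in> pos_hull v \<sigma>"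
    unfolding pos_hull_def by (intro CollectI exI[of _ "\<lambda>i. 1"]) simp
  \<comment> \<open>z lies strictly between this point and another point of the cone\<close>
  then obtain e where e: "e > 1"
    and "(1 - e) *\<^sub>R (\<Sum>i\<in>\<sigma>. 1 *\<^sub>R v i) + e *\<^sub>R z \<in> pos_hull v \<sigma>"
    using z convex_rel_interior_iff[OF convex_pos_hull[OF assms(1)]] by blast
  then obtain d where d: "\<forall>i\<in>\<sigma>. 0 \<le> d i"
    and ed: "(1 - e) *\<^sub>R (\<Sum>i\<in>\<sigma>. 1 *\<^sub>R v i) + e *\<^sub>R z = (\<Sum>i\<in>\<sigma>. d i *\<^sub>R v i)"
    unfolding pos_hull_def by blast
  have ez: "e *\<^sub>R z = (\<Sum>i\<in>\<sigma>. (d i + e - 1) *\<^sub>R v i)"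
    using ed by (simp add: algebra_simps scaleR_sum_right sum.distrib sum_subtractf)
  have "z = inverse e *\<^sub>R (e *\<^sub>R z)"
    using e by simp
  also have "\<dots> = (\<Sum>i\<in>\<sigma>. ((d i + e - 1) / e) *\<^sub>R v i)"
    unfolding ez by (simp add: scaleR_sum_right divide_inverse_commute)
  finally have "z = (\<Sum>i\<in>\<sigma>. ((d i + e - 1) / e) *\<^sub>R v i)" .
  moreover have "\<forall>i\<in>\<sigma>. 0 < (d i + e - 1) / e"
    using d e by auto
  ultimately show thesis
    by (intro that)
qed

lemma pos_coeffs_imp_rel_interior_pos_hull:
  fixes v :: "nat \<Rightarrow> 'a::euclidean_space"
  assumes fin: "finite \<sigma>" and c: "\<forall>i\<in>\<sigma>. 0 < c i"
  shows "(\<Sum>i\<in>\<sigma>. c i *\<^sub>R v i) \<in> rel_interior (pos_hull v \<sigma>)"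
proof -
  have "\<exists>e>1. (1 - e) *\<^sub>R x + e *\<^sub>R (\<Sum>i\<in>\<sigma>. c i *\<^sub>R v i) \<in> pos_hull v \<sigma>"
    if "x \<in> pos_hull v \<sigma>" for x
  proof -
    from that obtain d where d: "\<forall>i\<in>\<sigma>. 0 \<le> d i" "x = (\<Sum>i\<in>\<sigma>. d i *\<^sub>R v i)"
      unfolding pos_hull_def by blast
    define t where "t = Min (insert 1 ((\<lambda>i. c i / (d i + 1)) ` \<sigma>))"
    have "0 < t"
      unfolding t_def using fin c d by (simp add: Min_gr_iff add_nonneg_pos)
    have coeff: "0 \<le> (1 - (1 + t)) * d i + (1 + t) * c i" if "i \<in> \<sigma>" for i
    proof -
      have "t \<le> c i / (d i + 1)"
        unfolding t_def using fin that by (intro Min_le) auto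
      then have "t * (d i + 1) \<le> c i"
        using that d by (simp add: le_divide_eq add_nonneg_pos)
      then have "t * d i \<le> c i"
        using \<open>0 < t\<close> by (simp add: algebra_simps)
      moreover have "0 \<le> t * c i"
        using that c \<open>0 < t\<close> by (simp add: less_imp_le)
      ultimately show ?thesis
        by (simp add: algebra_simps)
    qed
    have "(1 - (1 + t)) *\<^sub>R x + (1 + t) *\<^sub>R (\<Sum>i\<in>\<sigma>. c i *\<^sub>R v i)
        = (\<Sum>i\<in>\<sigma>. ((1 - (1 + t)) * d i + (1 + t) * c i) *\<^sub>R v i)"
      unfolding d(2) by (rule scaleR_sum_add_scaleR_sum)
    then have "(1 - (1 + t)) *\<^sub>R x + (1 + t) *\<^sub>R (\<Sum>i\<in>\<sigma>. c i *\<^sub>R v i) \<in> pos_hull v \<sigma>"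
      unfolding pos_hull_def using coeff
      by (intro CollectI exI[of _ "\<lambda>i. (1 - (1 + t)) * d i + (1 + t) * c i"]) simp
    then show "\<exists>e>1. (1 - e) *\<^sub>R x + e *\<^sub>R (\<Sum>i\<in>\<sigma>. c i *\<^sub>R v i) \<in> pos_hull v \<sigma>"
      using \<open>0 < t\<close> by (intro exI[of _ "1 + t"]) simp
  qed
  moreover have "pos_hull v \<sigma> \<noteq> {}"
    using zero_in_pos_hull by blast
  ultimately show ?thesis
    using convex_rel_interior_iff[OF convex_pos_hull[OF fin]] by blast
qed

lemma rel_interior_pos_hull:
  fixes v :: "nat \<Rightarrow> 'a::euclidean_space"
  assumes "finite \<sigma>"
  shows "rel_interior (pos_hull v \<sigma>) = {x. \<exists>c. (\<forall>i\<in>\<sigma>. 0 < c i) \<and> x = (\<Sum>i\<in>\<sigma>. c i *\<^sub>R v i)}"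
  using rel_interior_pos_hull_imp_pos_coeffs[OF assms] pos_coeffs_imp_rel_interior_pos_hull[OF assms]
  by blast

lemma independent_coeffs_unique:
  fixes v :: "nat \<Rightarrow> 'a::real_vector"
  assumes "finite \<sigma>" "inj_on v \<sigma>" "independent (v ` \<sigma>)"
    and "(\<Sum>i\<in>\<sigma>. c i *\<^sub>R v i) = (\<Sum>i\<in>\<sigma>. d i *\<^sub>R v i)" and "k \<in> \<sigma>"
  shows "c k = d k"
proof -
  define u where "u x = c (the_inv_into \<sigma> v x) - d (the_inv_into \<sigma> v x)" for x
  have "(\<Sum>x\<in>v ` \<sigma>. u x *\<^sub>R x) = (\<Sum>i\<in>\<sigma>. (c i - d i) *\<^sub>R v i)"
    using assms(2) by (simp add: sum.reindex u_def the_inv_into_f_f)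
  also have "\<dots> = 0"
    using assms(4) by (simp add: scaleR_diff_left sum_subtractf)
  finally have "u (v k) = 0"
    using assms by (intro independentD[OF assms(3)]) auto
  then show ?thesis
    using assms(2,5) by (simp add: u_def the_inv_into_f_f)
qed

section \<open>Simplicial and polytopal fans\<close>

lemma simplicial_fanD:
  assumes "simplicial_fan n v F"
  shows "F \<noteq> {}"
    and "\<sigma> \<in> F \<Longrightarrow> \<sigma> \<subseteq> {0..<n}"
    and "\<sigma> \<in> F \<Longrightarrow> \<tau> \<subseteq> \<sigma> \<Longrightarrow> \<tau> \<in> F"
    and "i < n \<Longrightarrow> {i} \<in> F"
    and "\<sigma> \<in> F \<Longrightarrow> inj_on v \<sigma>"
    and "\<sigma> \<in> F \<Longrightarrow> independent (v ` \<sigma>)"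
    and "\<sigma> \<in> F \<Longrightarrow> \<tau> \<in> F \<Longrightarrow> pos_hull v \<sigma> \<inter> pos_hull v \<tau> = pos_hull v (\<sigma> \<inter> \<tau>)"
  using assms unfolding simplicial_fan_def by simp_all

lemma simplicial_fan_finite:
  assumes "simplicial_fan n v F" "\<sigma> \<in> F"
  shows "finite \<sigma>"
  using simplicial_fanD(2)[OF assms] by (rule finite_subset) simp

lemma simplicial_fan_empty:
  assumes "simplicial_fan n v F"
  shows "{} \<in> F"
proof -
  obtain \<sigma> where "\<sigma> \<in> F"
    using simplicial_fanD(1)[OF assms] by blast
  then show ?thesis
    using simplicial_fanD(3)[OF assms] by blast
qed

lemma simplicial_fan_rel_interior_subset:
  assumes fan: "simplicial_fan n v F" and "\<sigma> \<in> F" "\<tau> \<in> F"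
    and u: "u \<in> rel_interior (pos_hull v \<sigma>)" "u \<in> pos_hull v \<tau>"
  shows "\<sigma> \<subseteq> \<tau>"
proof
  fix k assume "k \<in> \<sigma>"
  have fin: "finite \<sigma>"
    using fan \<open>\<sigma> \<in> F\<close> by (rule simplicial_fan_finite)
  obtain c where c: "\<forall>i\<in>\<sigma>. 0 < c i" "u = (\<Sum>i\<in>\<sigma>. c i *\<^sub>R v i)"
    using u(1) rel_interior_pos_hull[OF fin] by blast
  have "u \<in> pos_hull v (\<sigma> \<inter> \<tau>)"
    using u rel_interior_subset simplicial_fanD(7)[OF fan \<open>\<sigma> \<in> F\<close> \<open>\<tau> \<in> F\<close>] by blast
  then obtain d where d: "u = (\<Sum>i\<in>\<sigma> \<inter> \<tau>. d i *\<^sub>R v i)"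
    unfolding pos_hull_def by blast
  have "u = (\<Sum>i\<in>\<sigma>. (if i \<in> \<tau> then d i else 0) *\<^sub>R v i)"
    unfolding d sum.inter_restrict[OF fin] by (rule sum.cong) auto
  with c(2) have "c k = (if k \<in> \<tau> then d k else 0)"
    by (intro independent_coeffs_unique[OF fin simplicial_fanD(5,6)[OF fan \<open>\<sigma> \<in> F\<close>] _ \<open>k \<in> \<sigma>\<close>])
      simp
  then show "k \<in> \<tau>"
    using c(1) \<open>k \<in> \<sigma>\<close> by (auto split: if_splits)
qed

lemma simplicial_fan_rel_interior_unique:
  assumes "simplicial_fan n v F" "\<sigma> \<in> F" "\<tau> \<in> F"
    and "u \<in> rel_interior (pos_hull v \<sigma>)" "u \<in> rel_interior (pos_hull v \<tau>)"
  shows "\<sigma> = \<tau>"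
  using simplicial_fan_rel_interior_subset[OF assms(1-4) rel_interior_subset[THEN subsetD, OF assms(5)]]
    simplicial_fan_rel_interior_subset[OF assms(1,3,2,5) rel_interior_subset[THEN subsetD, OF assms(4)]]
  by (rule subset_antisym)

lemma simplicial_fan_pos_hull_inj:
  assumes "simplicial_fan n v F" "\<sigma> \<in> F" "\<tau> \<in> F" and "pos_hull v \<sigma> = pos_hull v \<tau>"
  shows "\<sigma> = \<tau>"
proof -
  have "convex (pos_hull v \<sigma>)"
    using assms(1,2) by (intro convex_pos_hull simplicial_fan_finite)
  then obtain u where "u \<in> rel_interior (pos_hull v \<sigma>)"
    using rel_interior_eq_empty zero_in_pos_hull by (metis empty_iff ex_in_conv)
  then show ?thesis
    using simplicial_fan_rel_interior_unique[OF assms(1-3)] assms(4) by simp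
qed

lemma fan_coord_pos_coeffs:
  assumes fan: "simplicial_fan n v F" and "\<sigma> \<in> F"
    and c: "\<forall>i\<in>\<sigma>. 0 < c i" and u: "u = (\<Sum>i\<in>\<sigma>. c i *\<^sub>R v i)"
  shows "fan_coord v F u i = (if i \<in> \<sigma> then c i else 0)"
proof -
  have fin: "finite \<sigma>"
    using fan \<open>\<sigma> \<in> F\<close> by (rule simplicial_fan_finite)
  have "u \<in> rel_interior (pos_hull v \<sigma>)"
    using pos_coeffs_imp_rel_interior_pos_hull[OF fin c] u by simp
  then have cone_unique: "\<tau> = \<sigma>" if "\<tau> \<in> F" "u \<in> rel_interior (pos_hull v \<tau>)" for \<tau>
    using simplicial_fan_rel_interior_unique[OF fan that(1) \<open>\<sigma> \<in> F\<close> that(2)] by blast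
  show ?thesis
  proof (cases "i \<in> \<sigma>")
    case True
    have "(THE l. \<exists>\<tau>\<in>F. \<exists>c'. u \<in> rel_interior (pos_hull v \<tau>) \<and> i \<in> \<tau> \<and>
              u = (\<Sum>k\<in>\<tau>. c' k *\<^sub>R v k) \<and> l = c' i) = c i"
    proof (rule the_equality)
      show "\<exists>\<tau>\<in>F. \<exists>c'. u \<in> rel_interior (pos_hull v \<tau>) \<and> i \<in> \<tau> \<and>
              u = (\<Sum>k\<in>\<tau>. c' k *\<^sub>R v k) \<and> c i = c' i"
        using \<open>\<sigma> \<in> F\<close> \<open>u \<in> rel_interior (pos_hull v \<sigma>)\<close> True u
        by (intro bexI[of _ \<sigma>] exI[of _ c]) auto
    next
      fix l assume "\<exists>\<tau>\<in>F. \<exists>c'. u \<in> rel_interior (pos_hull v \<tau>) \<and> i \<in> \<tau> \<and>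
              u = (\<Sum>k\<in>\<tau>. c' k *\<^sub>R v k) \<and> l = c' i"
      then obtain \<tau> c' where \<tau>: "\<tau> \<in> F" "u \<in> rel_interior (pos_hull v \<tau>)"
        and u': "u = (\<Sum>k\<in>\<tau>. c' k *\<^sub>R v k)" and l: "l = c' i"
        by blast
      from \<tau> have "\<tau> = \<sigma>"
        by (rule cone_unique)
      with u u' have "(\<Sum>k\<in>\<sigma>. c' k *\<^sub>R v k) = (\<Sum>k\<in>\<sigma>. c k *\<^sub>R v k)"
        by simp
      from independent_coeffs_unique[OF fin simplicial_fanD(5,6)[OF fan \<open>\<sigma> \<in> F\<close>] this True] l
      show "l = c i"
        by simp
    qed
    moreover have "\<exists>\<tau>\<in>F. u \<in> rel_interior (pos_hull v \<tau>) \<and> i \<in> \<tau>"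
      using \<open>\<sigma> \<in> F\<close> \<open>u \<in> rel_interior (pos_hull v \<sigma>)\<close> True by blast
    ultimately show ?thesis
      unfolding fan_coord_def using True by (simp only: if_True)
  next
    case False
    then have "\<not> (\<exists>\<tau>\<in>F. u \<in> rel_interior (pos_hull v \<tau>) \<and> i \<in> \<tau>)"
      using cone_unique by blast
    with False show ?thesis
      unfolding fan_coord_def by (simp only: if_False)
  qed
qed

lemma fan_coord_pos_iff:
  assumes fan: "simplicial_fan n v F" and "\<sigma> \<in> F" and "u \<in> rel_interior (pos_hull v \<sigma>)"
  shows "0 < fan_coord v F u i \<longleftrightarrow> i \<in> \<sigma>"
proof -
  obtain c where "\<forall>i\<in>\<sigma>. 0 < c i" "u = (\<Sum>i\<in>\<sigma>. c i *\<^sub>R v i)"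
    using assms(3) rel_interior_pos_hull[OF simplicial_fan_finite[OF fan \<open>\<sigma> \<in> F\<close>]] by blast
  then show ?thesis
    using fan_coord_pos_coeffs[OF fan \<open>\<sigma> \<in> F\<close>] by auto
qed

lemma polytopal_fan_covers:
  fixes v :: "nat \<Rightarrow> real^'d"
  assumes "polytopal_fan v F" and "F \<noteq> {}"
  obtains \<sigma> where "\<sigma> \<in> F" "u \<in> pos_hull v \<sigma>"
proof -
  obtain P where "polytope P"
    and cones: "{pos_hull v \<sigma> | \<sigma>. \<sigma> \<in> F} = {normal_cone P G | G. G face_of P \<and> G \<noteq> {}}"
    using assms(1) unfolding polytopal_fan_def by blast
  obtain \<sigma>\<^sub>0 where "\<sigma>\<^sub>0 \<in> F"
    using assms(2) by blast
  then have "pos_hull v \<sigma>\<^sub>0 \<in> {normal_cone P G | G. G face_of P \<and> G \<noteq> {}}"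
    unfolding cones[symmetric] by blast
  then have "P \<noteq> {}"
    using face_of_imp_subset by blast
  moreover have "continuous_on P (\<lambda>y. u \<bullet> y)"
    by (intro continuous_intros)
  \<comment> \<open>u is a normal vector of the face of P on which the linear functional u attains its maximum\<close>
  ultimately obtain x where x: "x \<in> P" "\<forall>y\<in>P. u \<bullet> y \<le> u \<bullet> x"
    using continuous_attains_sup[OF polytope_imp_compact[OF \<open>polytope P\<close>]] by blast
  define G where "G = P \<inter> {y. u \<bullet> y = u \<bullet> x}"
  have "G face_of P"
    unfolding G_def using x(2)
    by (intro face_of_Int_supporting_hyperplane_le polytope_imp_convex[OF \<open>polytope P\<close>]) blast
  moreover have "G \<noteq> {}"
    unfolding G_def using x(1) by blast
  ultimately have "normal_cone P G \<in> {pos_hull v \<sigma> | \<sigma>. \<sigma> \<in> F}"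
    unfolding cones by blast
  then obtain \<sigma> where "\<sigma> \<in> F" "normal_cone P G = pos_hull v \<sigma>"
    by blast
  moreover have "u \<in> normal_cone P G"
    unfolding normal_cone_def G_def using x(2) by auto
  ultimately show thesis
    using that by simp
qed

lemma pos_hull_strict_support:
  assumes "finite \<sigma>" and "u \<in> pos_hull v \<sigma>"
  obtains \<tau> c where "\<tau> \<subseteq> \<sigma>" "\<forall>i\<in>\<tau>. 0 < c i" "u = (\<Sum>i\<in>\<tau>. c i *\<^sub>R v i)"
proof -
  obtain c where c: "\<forall>i\<in>\<sigma>. 0 \<le> c i" "u = (\<Sum>i\<in>\<sigma>. c i *\<^sub>R v i)"
    using assms(2) unfolding pos_hull_def by blast
  define \<tau> where "\<tau> = {i\<in>\<sigma>. 0 < c i}"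
  have "(\<Sum>i\<in>\<sigma>. c i *\<^sub>R v i) = (\<Sum>i\<in>\<tau>. c i *\<^sub>R v i)"
    using c(1) by (intro sum.mono_neutral_right[OF assms(1)]) (auto simp: \<tau>_def dual_order.order_iff_strict)
  with c(2) show thesis
    by (intro that[of \<tau>]) (auto simp: \<tau>_def)
qed

lemma fan_complete:
  fixes v :: "nat \<Rightarrow> real^'d"
  assumes fan: "simplicial_fan n v F" and "polytopal_fan v F"
  obtains \<sigma> where "\<sigma> \<in> F" "u \<in> rel_interior (pos_hull v \<sigma>)"
proof -
  obtain \<sigma> where "\<sigma> \<in> F" "u \<in> pos_hull v \<sigma>"
    using polytopal_fan_covers[OF assms(2) simplicial_fanD(1)[OF fan]] by blast
  moreover have "finite \<sigma>"
    using fan \<open>\<sigma> \<in> F\<close> by (rule simplicial_fan_finite)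
  ultimately obtain \<tau> c where "\<tau> \<subseteq> \<sigma>" "\<forall>i\<in>\<tau>. 0 < c i" and u: "u = (\<Sum>i\<in>\<tau>. c i *\<^sub>R v i)"
    using pos_hull_strict_support by blast
  moreover have "\<tau> \<in> F"
    using simplicial_fanD(3)[OF fan \<open>\<sigma> \<in> F\<close> \<open>\<tau> \<subseteq> \<sigma>\<close>] .
  moreover have "finite \<tau>"
    using \<open>finite \<sigma>\<close> \<open>\<tau> \<subseteq> \<sigma>\<close> by (rule finite_subset[rotated])
  ultimately show thesis
    using that[of \<tau>] pos_coeffs_imp_rel_interior_pos_hull[of \<tau> c v] by simp
qed

section \<open>Cells of the product fan\<close>

definition support_graph :: "('m \<Rightarrow> nat set) \<Rightarrow> (nat \<times> 'm) set" where
  "support_graph s = {(i, j). i \<in> s j}"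

definition product_cone :: "(nat \<Rightarrow> real^'d) \<Rightarrow> ('m \<Rightarrow> nat set) \<Rightarrow> (real^'d^'m) set" where
  "product_cone v s = {U. \<forall>j. U $ j \<in> pos_hull v (s j)}"

definition product_cone_relint :: "(nat \<Rightarrow> real^'d) \<Rightarrow> ('m \<Rightarrow> nat set) \<Rightarrow> (real^'d^'m) set" where
  "product_cone_relint v s = {U. \<forall>j. U $ j \<in> rel_interior (pos_hull v (s j))}"

lemma inj_support_graph: "inj support_graph"
proof (rule injI)
  fix s s' :: "'m \<Rightarrow> nat set"
  assume "support_graph s = support_graph s'"
  then have "i \<in> s j \<longleftrightarrow> i \<in> s' j" for i j
    unfolding support_graph_def by (metis case_prod_conv mem_Collect_eq)
  then show "s = s'"
    by blast
qed

lemma graph_of_eq_support_graph: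
  assumes fan: "simplicial_fan n v F" and "\<forall>j. s j \<in> F" and "U \<in> product_cone_relint v s"
  shows "graph_of n v F U = support_graph s"
proof -
  have "0 < fan_coord v F (U $ j) i \<longleftrightarrow> i \<in> s j" for i j
    using assms fan_coord_pos_iff unfolding product_cone_relint_def by blast
  moreover have "i \<in> s j \<Longrightarrow> i < n" for i j
    using simplicial_fanD(2)[OF fan] assms(2) by fastforce
  ultimately show ?thesis
    unfolding graph_of_def support_graph_def by auto
qed

lemma fan_complete_product:
  fixes U :: "real^'d^'m"
  assumes "simplicial_fan n v F" and "polytopal_fan v F"
  obtains s where "\<forall>j. s j \<in> F" "U \<in> product_cone_relint v s"
proof -
  have "\<exists>\<sigma>. \<sigma> \<in> F \<and> U $ j \<in> rel_interior (pos_hull v \<sigma>)" for j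
    using fan_complete[OF assms, of "U $ j"] by blast
  then obtain s where "\<forall>j. s j \<in> F \<and> U $ j \<in> rel_interior (pos_hull v (s j))"
    by metis
  then show thesis
    using that unfolding product_cone_relint_def by blast
qed

lemma graph_of_eq_support_graph_iff:
  assumes "simplicial_fan n v F" "polytopal_fan v F" and "\<forall>j. s j \<in> F"
  shows "graph_of n v F U = support_graph s \<longleftrightarrow> U \<in> product_cone_relint v s"
proof
  assume graph: "graph_of n v F U = support_graph s"
  obtain s' where "\<forall>j. s' j \<in> F" "U \<in> product_cone_relint v s'"
    using fan_complete_product[OF assms(1,2)] by blast
  moreover from this have "s' = s"
    using graph graph_of_eq_support_graph[OF assms(1)] inj_support_graph by (metis injD)
  ultimately show "U \<in> product_cone_relint v s"
    by simp
qed (rule graph_of_eq_support_graph[OF assms(1,3)])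

lemma U_of_support_graph:
  assumes "simplicial_fan n v F" "polytopal_fan v F" and "\<forall>j. s j \<in> F"
  shows "U_of n v F (support_graph s) = product_cone_relint v s"
  unfolding U_of_def using graph_of_eq_support_graph_iff[OF assms] by blast

lemma barycenter_in_product_cone_relint:
  assumes "\<forall>j. finite (s j)"
  shows "(\<chi> j. \<Sum>i\<in>s j. v i) \<in> product_cone_relint v s"
  unfolding product_cone_relint_def
  using pos_coeffs_imp_rel_interior_pos_hull[OF assms[rule_format], where c = "\<lambda>_. 1" and v = v] by simp

lemma range_graph_of:
  assumes fan: "simplicial_fan n v F" and "polytopal_fan v F"
  shows "range (graph_of n v F :: real^'d^'m \<Rightarrow> _) = support_graph ` {s. \<forall>j. s j \<in> F}"
proof
  show "range (graph_of n v F :: real^'d^'m \<Rightarrow> _) \<subseteq> support_graph ` {s. \<forall>j. s j \<in> F}"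
  proof clarify
    fix U :: "real^'d^'m"
    obtain s where "\<forall>j. s j \<in> F" "U \<in> product_cone_relint v s"
      using fan_complete_product[OF assms] by blast
    then show "graph_of n v F U \<in> support_graph ` {s. \<forall>j. s j \<in> F}"
      using graph_of_eq_support_graph[OF fan] by blast
  qed
next
  show "support_graph ` {s. \<forall>j. s j \<in> F} \<subseteq> range (graph_of n v F :: real^'d^'m \<Rightarrow> _)"
  proof clarify
    fix s :: "'m \<Rightarrow> nat set" assume "\<forall>j. s j \<in> F"
    moreover from this have "(\<chi> j. \<Sum>i\<in>s j. v i) \<in> product_cone_relint v s"
      using simplicial_fan_finite[OF fan] by (intro barycenter_in_product_cone_relint) blast
    ultimately show "support_graph s \<in> range (graph_of n v F :: real^'d^'m \<Rightarrow> _)"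
      using graph_of_eq_support_graph[OF fan] by (metis rangeI)
  qed
qed

lemma closed_product_cone:
  "(\<And>j. finite (s j)) \<Longrightarrow> closed (product_cone v s)"
  unfolding product_cone_def by (intro closed_vector_box allI closed_pos_hull)

lemma closure_product_cone_relint:
  fixes v :: "nat \<Rightarrow> real^'d" and s :: "'m::finite \<Rightarrow> nat set"
  assumes fin: "\<And>j. finite (s j)"
  shows "closure (product_cone_relint v s) = product_cone v s"
proof
  have "product_cone_relint v s \<subseteq> product_cone v s"
    unfolding product_cone_relint_def product_cone_def by (auto intro: rel_interior_subset[THEN subsetD])
  then show "closure (product_cone_relint v s) \<subseteq> product_cone v s"
    using closed_product_cone[OF fin] by (rule closure_minimal)
next
  define W :: "real^'d^'m" where "W = (\<chi> j. \<Sum>i\<in>s j. v i)"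
  \<comment> \<open>pushing a point of the cell towards W makes all its coefficients positive\<close>
  have shift: "U + t *\<^sub>R W \<in> product_cone_relint v s" if "U \<in> product_cone v s" "0 < t" for U t
    unfolding product_cone_relint_def
  proof (intro CollectI allI)
    fix j
    from that(1) have "U $ j \<in> pos_hull v (s j)"
      unfolding product_cone_def by blast
    then obtain a where "\<forall>i\<in>s j. 0 \<le> a i" "U $ j = (\<Sum>i\<in>s j. a i *\<^sub>R v i)"
      unfolding pos_hull_def by blast
    moreover have "(U + t *\<^sub>R W) $ j = 1 *\<^sub>R (U $ j) + t *\<^sub>R (\<Sum>i\<in>s j. 1 *\<^sub>R v i)"
      unfolding W_def by simp
    ultimately have "(U + t *\<^sub>R W) $ j = (\<Sum>i\<in>s j. (1 * a i + t * 1) *\<^sub>R v i)"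
      by (simp only: scaleR_sum_add_scaleR_sum)
    moreover have "\<forall>i\<in>s j. 0 < 1 * a i + t * 1"
      using \<open>\<forall>i\<in>s j. 0 \<le> a i\<close> \<open>0 < t\<close> by (simp add: add_nonneg_pos)
    ultimately show "(U + t *\<^sub>R W) $ j \<in> rel_interior (pos_hull v (s j))"
      using pos_coeffs_imp_rel_interior_pos_hull[OF fin[of j], where c = "\<lambda>i. 1 * a i + t * 1" and v = v]
      by simp
  qed
  show "product_cone v s \<subseteq> closure (product_cone_relint v s)"
  proof
    fix U assume "U \<in> product_cone v s"
    show "U \<in> closure (product_cone_relint v s)"
      unfolding closure_approachable
    proof (intro allI impI)
      fix e :: real assume "0 < e"
      define t where "t = e / (norm W + 1)"
      have "0 < norm W + 1"
        by (simp add: add_nonneg_pos)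
      then have "0 < t" "t * (norm W + 1) = e"
        unfolding t_def using \<open>0 < e\<close> by simp_all
      then have "dist (U + t *\<^sub>R W) U < e"
        using \<open>0 < t\<close> by (simp add: dist_norm algebra_simps)
      then show "\<exists>U'\<in>product_cone_relint v s. dist U' U < e"
        using shift[OF \<open>U \<in> product_cone v s\<close> \<open>0 < t\<close>] by blast
    qed
  qed
qed

lemma product_cone_eq_iff:
  "product_cone v s = product_cone v s' \<longleftrightarrow> (\<forall>j. pos_hull v (s j) = pos_hull v (s' j))"
proof
  have "pos_hull v (s j) \<subseteq> pos_hull v (s' j)" if "product_cone v s \<subseteq> product_cone v s'" for s s' j
  proof
    fix x assume "x \<in> pos_hull v (s j)"
    then have "(\<chi> k. if k = j then x else 0) \<in> product_cone v s"
      unfolding product_cone_def using zero_in_pos_hull by auto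
    then have "(\<chi> k. if k = j then x else 0) $ j \<in> pos_hull v (s' j)"
      using that unfolding product_cone_def by blast
    then show "x \<in> pos_hull v (s' j)"
      by simp
  qed
  then show "product_cone v s = product_cone v s' \<Longrightarrow> \<forall>j. pos_hull v (s j) = pos_hull v (s' j)"
    by (metis subset_antisym order_refl)
qed (simp add: product_cone_def)

lemma inj_on_product_cone:
  assumes "simplicial_fan n v F"
  shows "inj_on (product_cone v) {s. \<forall>j. s j \<in> F}"
proof (rule inj_onI)
  fix s s' assume "s \<in> {s. \<forall>j. s j \<in> F}" "s' \<in> {s. \<forall>j. s j \<in> F}"
    and "product_cone v s = product_cone v s'"
  then show "s = s'"
    using simplicial_fan_pos_hull_inj[OF assms] unfolding product_cone_eq_iff by blast
qed

lemma Delta_pow_eq: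
  "(Delta_pow v F :: (real^'d^'m) set set) = product_cone v ` {s. \<forall>j. s j \<in> F}"
  unfolding Delta_pow_def product_cone_def by blast

lemma Upsilon_eq:
  assumes fan: "simplicial_fan n v F" and "polytopal_fan v F"
  shows "(Upsilon n v F :: (real^'d^'m::finite) set set)
    = product_cone v ` {s. (\<forall>j. s j \<in> F) \<and> \<not> has_matching (support_graph s) n}"
proof -
  have closure_cell: "closure (U_of n v F (support_graph s)) = product_cone v s"
    if "\<forall>j. s j \<in> F" for s :: "'m \<Rightarrow> nat set"
    using U_of_support_graph[OF assms that] closure_product_cone_relint
      simplicial_fan_finite[OF fan] that by metis
  have "(Upsilon n v F :: (real^'d^'m) set set)
      = (\<lambda>s. closure (U_of n v F (support_graph s)))
          ` {s. (\<forall>j. s j \<in> F) \<and> \<not> has_matching (support_graph s) n}"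
    unfolding Upsilon_def range_graph_of[OF assms] by blast
  also have "\<dots> = product_cone v ` {s. (\<forall>j. s j \<in> F) \<and> \<not> has_matching (support_graph s) n}"
    using closure_cell by (intro image_cong) auto
  finally show ?thesis .
qed

section \<open>Matchings\<close>

lemma has_matching_le_card:
  fixes G :: "('a \<times> 'm::finite) set"
  assumes "has_matching G k"
  shows "k \<le> CARD('m)"
proof -
  obtain M where "M \<subseteq> G \<and> finite M \<and> card M = k \<and> inj_on fst M \<and> inj_on snd M"
    using assms unfolding has_matching_def by (rule exE)
  then have "k = card (snd ` M)"
    by (simp add: card_image)
  also have "\<dots> \<le> CARD('m)"
    by (rule card_mono) simp_all
  finally show ?thesis .
qed

lemma has_matching_support_graph:
  assumes fan: "simplicial_fan n v F" and "n \<le> CARD('m::finite)"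
  obtains s :: "'m::finite \<Rightarrow> nat set" where "\<forall>j. s j \<in> F" "has_matching (support_graph s) n"
proof -
  obtain e :: "nat \<Rightarrow> 'm" where e: "inj_on e {0..<n}"
    using card_le_inj[of "{0..<n}" "UNIV :: 'm set"] assms(2) by auto
  define s where "s j = {i. i < n \<and> e i = j}" for j
  have "s j \<in> F" for j
  proof (cases "\<exists>i<n. e i = j")
    case True
    then obtain i where "i < n" "e i = j" by blast
    then have "s j = {i}"
      unfolding s_def using e by (auto simp: inj_on_def)
    then show ?thesis
      using simplicial_fanD(4)[OF fan \<open>i < n\<close>] by simp
  next
    case False
    then have "s j = {}"
      unfolding s_def by blast
    then show ?thesis
      using simplicial_fan_empty[OF fan] by simp
  qed
  moreover have "has_matching (support_graph s) n"
    unfolding has_matching_def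
  proof (intro exI conjI)
    let ?M = "(\<lambda>i. (i, e i)) ` {0..<n}"
    show "?M \<subseteq> support_graph s" "finite ?M" "inj_on fst ?M" "inj_on snd ?M"
      unfolding support_graph_def s_def using e by (auto simp: inj_on_def)
    show "card ?M = n"
      by (simp add: card_image inj_on_def)
  qed
  ultimately show thesis
    using that by blast
qed

lemma image_Collect_psubset_image_iff:
  assumes "inj_on f A"
  shows "f ` {x \<in> A. P x} \<subset> f ` A \<longleftrightarrow> (\<exists>x\<in>A. \<not> P x)"
proof
  assume "\<exists>x\<in>A. \<not> P x"
  then obtain x where "x \<in> A" "\<not> P x"
    by blast
  then have "f x \<notin> f ` {x \<in> A. P x}"
    using assms by (auto simp: inj_on_def)
  with \<open>x \<in> A\<close> show "f ` {x \<in> A. P x} \<subset> f ` A"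
    by blast
qed blast

theorem lemma3p11:
  fixes n :: nat and v :: "nat \<Rightarrow> real^'d" and F :: "nat set set"
  assumes "simplicial_fan n v F" and "polytopal_fan v F"
  shows "((Upsilon n v F :: (real^'d^'m::finite) set set) \<subset> Delta_pow v F)
           \<longleftrightarrow> n \<le> CARD('m)"
proof -
  let ?S = "{s :: 'm \<Rightarrow> nat set. \<forall>j. s j \<in> F}"
  have "(Upsilon n v F :: (real^'d^'m) set set) \<subset> Delta_pow v F
      \<longleftrightarrow> (\<exists>s\<in>?S. has_matching (support_graph s) n)"
    unfolding Upsilon_eq[OF assms] Delta_pow_eq
    using image_Collect_psubset_image_iff[OF inj_on_product_cone[OF assms(1)],
        of "\<lambda>s. \<not> has_matching (support_graph s) n"]
    by simp
  also have "\<dots> \<longleftrightarrow> n \<le> CARD('m)"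
    using has_matching_le_card has_matching_support_graph[OF assms(1)] by blast
  finally show ?thesis .
qed

end
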